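(* There exist universal constants $0<c\le C$ such that for all integers $n\ge k\ge 2$ and $r\ge 0$, \[ c\,k(\log(n/k)+r+1)\le \mathsf{opt}_{\operatorname{bandit}}^{\operatorname{det}}(n,k,r)\le C\,k(\log(n/k)+r+1). \]
   Context: Prediction with expert advice: $\mathcal{Y}=\{1,\dots,k\}$, $\mathcal{X}=[k]^n$, experts $h_i(x)=x_i$ for $i=1,\dots,n$. For $r\ge 0$ let $\mathcal{P}_r$ be the set of finite sequences of examples in $\mathcal{X}\times\mathcal{Y}$ on which some $h_i$ errs ($h_i(x)\ne y$) on at most $r$ examples. Online learning with bandit feedback: in rounds $t=1,2,\dots$ the adversary presents $x_t$, a deterministic learner predicts $\hat y_t$ as a function of past observations and $x_t$, and observes only whether $\hat y_t$ equals the true label $y_t$; a mistake is $\hat y_t\ne y_t$. $\mathsf{opt}_{\operatorname{bandit}}^{\operatorname{det}}(n,k,r)$ is the infimum over deterministic learners of the supremum over sequences $S\in\mathcal{P}_r$ of the number of mistakes (equivalently, over adversaries whose bandit feedback is consistent with some expert being inconsistent with the feedback in at most $r$ rounds). *)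

theory Defs
  imports Complex_Main "HOL-Library.Extended_Nat"
begin

text \<open>Instances x in [k]^n are lists of length n with entries in {1..k};
 labels are in {1..k}.  Expert i (i < n) predicts x ! i.\<close>

type_synonym inst = "nat list"
type_synonym example = "inst \<times> nat"

text \<open>History of a bandit learner: triples (x_s, prediction, feedback "prediction = label").\<close>
type_synonym history = "(inst \<times> nat \<times> bool) list"

type_synonym learner = "history \<Rightarrow> inst \<Rightarrow> nat"

definition valid_example :: "nat \<Rightarrow> nat \<Rightarrow> example \<Rightarrow> bool" where
  "valid_example n k e \<longleftrightarrow> length (fst e) = n \<and> set (fst e) \<subseteq> {1..k} \<and> snd e \<in> {1..k}"

definition expert_errors :: "nat \<Rightarrow> example list \<Rightarrow> nat" where
  "expert_errors i S = length (filter (\<lambda>(x, y). x ! i \<noteq> y) S)"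

definition P_seqs :: "nat \<Rightarrow> nat \<Rightarrow> nat \<Rightarrow> example list set" where
  "P_seqs n k r = {S. (\<forall>e\<in>set S. valid_example n k e) \<and> (\<exists>i<n. expert_errors i S \<le> r)}"

fun bandit_mistakes :: "learner \<Rightarrow> history \<Rightarrow> example list \<Rightarrow> nat" where
  "bandit_mistakes L h [] = 0"
| "bandit_mistakes L h ((x, y) # S) =
     (let p = L h x in (if p \<noteq> y then 1 else 0) + bandit_mistakes L (h @ [(x, p, p = y)]) S)"

definition opt_bandit_det :: "nat \<Rightarrow> nat \<Rightarrow> nat \<Rightarrow> enat" where
  "opt_bandit_det n k r =
     (INF L :: learner. SUP S \<in> P_seqs n k r. enat (bandit_mistakes L [] S))"

end

theory Submission
  imports Defs
begin

text \<open>
  Upper bound: after each round the learner knows which experts are inconsistent with the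
  feedback, and an expert can be inconsistent only in a round in which it errs. Weighted majority,
  with weight \<open>2^(r+1-e)\<close> on an expert that has been inconsistent \<open>e \<le> r\<close> times, loses a
  \<open>1/(2k)\<close> fraction of its total weight \<open>\<le> n 2^(r+1)\<close> with every mistake while that weight
  is at least \<open>k\<close>, and at least one unit afterwards; hence \<open>O(k (log (n/k) + r + 1))\<close> mistakes.

  Lower bound: an adversary that rejects every prediction chooses the labels only afterwards, so
  that a fixed expert errs exactly when it agreed with the learner. Showing the instance
  \<open>(1, 2, ..., k, k, ..., k)\<close> for \<open>k (r+1) - 1\<close> rounds, one of the first \<open>k\<close> experts agrees at
  most \<open>r\<close> times. Dealing the experts that never agreed evenly among the \<open>k\<close> labels, at most a
  \<open>1/k\<close> fraction of them is lost per round, so one survives \<open>(k/2) ln (n/k) - k\<close> rounds.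
\<close>

definition valid_instance :: "nat \<Rightarrow> nat \<Rightarrow> inst \<Rightarrow> bool" where
  "valid_instance n k x \<longleftrightarrow> length x = n \<and> set x \<subseteq> {1..k}"

lemma valid_example_iff: "valid_example n k (x, y) \<longleftrightarrow> valid_instance n k x \<and> y \<in> {1..k}"
  by (simp add: valid_example_def valid_instance_def)

lemma valid_instance_nth: "valid_instance n k x \<Longrightarrow> i < n \<Longrightarrow> x ! i \<in> {1..k}"
  by (auto simp: valid_instance_def dest: nth_mem)

lemma expert_errors_Nil [simp]: "expert_errors i [] = 0"
  by (simp add: expert_errors_def)

lemma expert_errors_Cons [simp]:
  "expert_errors i ((x, y) # S) = (if x ! i \<noteq> y then 1 else 0) + expert_errors i S"
  by (simp add: expert_errors_def)

section \<open>Upper bound: weighted majority over the plausible experts\<close>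

definition inconsistencies :: "nat \<Rightarrow> history \<Rightarrow> nat" where
  "inconsistencies i h = length (filter (\<lambda>(x, p, b). (x ! i = p) \<noteq> b) h)"

lemma inconsistencies_Nil [simp]: "inconsistencies i [] = 0"
  by (simp add: inconsistencies_def)

lemma inconsistencies_snoc [simp]:
  "inconsistencies i (h @ [(x, p, b)]) = inconsistencies i h + (if (x ! i = p) \<noteq> b then 1 else 0)"
  by (simp add: inconsistencies_def)

lemma inconsistencies_le_snoc: "inconsistencies i h \<le> inconsistencies i (h @ [e])"
  by (cases e) simp

text \<open>An expert inconsistent more than \<open>r\<close> times cannot witness membership in \<open>P_seqs n k r\<close>.\<close>
definition weight :: "nat \<Rightarrow> nat \<Rightarrow> nat" where
  "weight r e = (if e \<le> r then 2 ^ (r + 1 - e) else 0)"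

lemma weight_antimono: "e \<le> e' \<Longrightarrow> weight r e' \<le> weight r e"
  by (auto simp: weight_def intro: power_increasing)

lemma weight_Suc: "2 * weight r (Suc e) \<le> weight r e"
  by (auto simp: weight_def Suc_diff_le)

lemma weight_pos_iff: "0 < weight r e \<longleftrightarrow> e \<le> r"
  by (simp add: weight_def)

definition total_weight :: "nat \<Rightarrow> nat \<Rightarrow> history \<Rightarrow> nat" where
  "total_weight n r h = (\<Sum>i<n. weight r (inconsistencies i h))"

definition label_weight :: "nat \<Rightarrow> nat \<Rightarrow> history \<Rightarrow> inst \<Rightarrow> nat \<Rightarrow> nat" where
  "label_weight n r h x v = (\<Sum>i\<in>{i\<in>{..<n}. x ! i = v}. weight r (inconsistencies i h))"

definition weighted_majority :: "nat \<Rightarrow> nat \<Rightarrow> nat \<Rightarrow> learner" where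
  "weighted_majority n k r h x = arg_max_on (label_weight n r h x) {1..k}"

lemma weighted_majority_maximal:
  fixes n k r :: nat and h :: history and x :: inst
  assumes "1 \<le> k"
  defines "p \<equiv> weighted_majority n k r h x"
  shows "p \<in> {1..k}" and "\<And>v. v \<in> {1..k} \<Longrightarrow> label_weight n r h x v \<le> label_weight n r h x p"
proof -
  let ?f = "label_weight n r h x"
  have "\<forall>v. v \<in> {1..k} \<longrightarrow> ?f v < Suc (\<Sum>v\<in>{1..k}. ?f v)"
    by (simp add: le_imp_less_Suc member_le_sum)
  from arg_max_nat_lemma[of "\<lambda>v. v \<in> {1..k}", OF _ this] assms
  show "p \<in> {1..k}" and "\<And>v. v \<in> {1..k} \<Longrightarrow> ?f v \<le> ?f p"
    by (auto simp: weighted_majority_def arg_max_on_def)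
qed

lemma sum_label_weight:
  "valid_instance n k x \<Longrightarrow> (\<Sum>v\<in>{1..k}. label_weight n r h x v) = total_weight n r h"
  unfolding label_weight_def total_weight_def
  by (rule sum.group) (use valid_instance_nth in fastforce)+

lemma total_weight_le_majority:
  assumes "valid_instance n k x" "1 \<le> k"
  shows "total_weight n r h \<le> k * label_weight n r h x (weighted_majority n k r h x)"
proof -
  have "total_weight n r h = (\<Sum>v\<in>{1..k}. label_weight n r h x v)"
    using sum_label_weight[OF assms(1)] by simp
  also have "\<dots> \<le> (\<Sum>v\<in>{1..k}. label_weight n r h x (weighted_majority n k r h x))"
    by (intro sum_mono weighted_majority_maximal assms(2))
  finally show ?thesis by simp
qed

lemma total_weight_snoc_le: "total_weight n r (h @ [e]) \<le> total_weight n r h"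
  unfolding total_weight_def by (intro sum_mono weight_antimono inconsistencies_le_snoc)

lemma total_weight_pos: "i < n \<Longrightarrow> inconsistencies i h \<le> r \<Longrightarrow> 0 < total_weight n r h"
  unfolding total_weight_def
  by (metis finite_lessThan lessThan_iff less_le_trans member_le_sum weight_pos_iff zero_le)

text \<open>On a mistake every expert that voted for the prediction becomes inconsistent, which at least
  halves its weight; the prediction carries at least a \<open>1/k\<close> share of the total weight.\<close>
lemma total_weight_mistake:
  fixes n k r :: nat and h :: history and x :: inst
  assumes "valid_instance n k x" "1 \<le> k"
  defines "p \<equiv> weighted_majority n k r h x"
  shows "2 * k * total_weight n r (h @ [(x, p, False)]) + total_weight n r h \<le> 2 * k * total_weight n r h"
proof -
  let ?w = "\<lambda>i. weight r (inconsistencies i h)"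
  let ?W = "total_weight n r h" and ?W' = "total_weight n r (h @ [(x, p, False)])"
    and ?G = "label_weight n r h x p"
  have halving: "2 * weight r (inconsistencies i (h @ [(x, p, False)])) + (if x ! i = p then ?w i else 0)
      \<le> 2 * ?w i" for i
    using weight_Suc[of r "inconsistencies i h"] by simp
  have "2 * ?W' + ?G \<le> 2 * ?W"
    unfolding total_weight_def label_weight_def sum.inter_filter[OF finite_lessThan]
      sum_distrib_left sum.distrib[symmetric]
    by (intro sum_mono halving)
  then have "k * (2 * ?W') + k * ?G \<le> k * (2 * ?W)"
    by (metis add_mult_distrib2 mult_le_mono2)
  moreover have "?W \<le> k * ?G"
    using total_weight_le_majority[OF assms(1,2)] unfolding p_def .
  ultimately show ?thesis by simp
qed

text \<open>The number of mistakes still affordable with total weight \<open>W\<close>: while \<open>W \<ge> k\<close> a mistake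
  multiplies \<open>W\<close> by at most \<open>1 - 1/(2k)\<close>, costing one unit of \<open>2k ln (W/k)\<close>, since
  \<open>ln (1 - 1/(2k)) \<le> -1/(2k)\<close>; below \<open>k\<close> it lowers the integer \<open>W\<close> by at least one.\<close>
definition potential :: "nat \<Rightarrow> nat \<Rightarrow> real" where
  "potential k W = (if W < k then real W else real k + 2 * real k * ln (real W / real k))"

lemma ln_ratio_nonneg: "k \<le> W \<Longrightarrow> 0 \<le> ln (real W / real k)"
  by (cases "k = 0") simp_all

lemma potential_nonneg: "0 \<le> potential k W"
  by (auto simp: potential_def ln_ratio_nonneg)

lemma potential_ge_threshold: "k \<le> W \<Longrightarrow> real k \<le> potential k W"
  using ln_ratio_nonneg[of k W] by (simp add: potential_def)

lemma potential_mono: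
  assumes "W' \<le> W"
  shows "potential k W' \<le> potential k W"
proof (cases "W < k")
  case False
  have "real k * ln (real W' / real k) \<le> real k * ln (real W / real k)" if "k \<le> W'"
    using that assms by (cases "k = 0") (auto intro: mult_left_mono simp: divide_right_mono)
  moreover have "0 \<le> real k * ln (real W / real k)"
    using False ln_ratio_nonneg[of k W] by simp
  ultimately show ?thesis
    using False assms by (auto simp: potential_def)
qed (use assms in \<open>simp add: potential_def\<close>)

lemma potential_mistake:
  assumes "0 < W" and shrink: "2 * k * W' + W \<le> 2 * k * W"
  shows "potential k W' + 1 \<le> potential k W"
proof -
  have "0 < k"
    using assms by (auto intro: Nat.gr0I)
  have "2 * k * W' < 2 * k * W"
    using assms by linarith
  then have "W' < W"
    by simp
  show ?thesis
  proof (cases "k \<le> W'")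
    case True
    have "2 * real k * real W' + real W \<le> 2 * real k * real W"
      using shrink by (metis of_nat_add of_nat_le_iff of_nat_mult of_nat_numeral)
    then have "real W' / real W \<le> 1 - 1 / (2 * real k)"
      using \<open>0 < W\<close> \<open>0 < k\<close> by (simp add: field_simps)
    moreover have "ln (real W' / real W) \<le> real W' / real W - 1"
      using True \<open>0 < k\<close> \<open>0 < W\<close> by (intro ln_le_minus_one) simp
    ultimately have "ln (real W' / real W) \<le> - 1 / (2 * real k)"
      by simp
    then have "2 * real k * ln (real W' / real W) \<le> -1"
      using \<open>0 < k\<close> by (simp add: field_simps)
    moreover have "ln (real W' / real W) = ln (real W' / real k) - ln (real W / real k)"
      using True \<open>0 < k\<close> \<open>W' < W\<close> by (simp add: ln_div)
    ultimately show ?thesis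
      using True \<open>W' < W\<close> by (simp add: potential_def algebra_simps)
  next
    case False
    then have "potential k W' + 1 = real (Suc W')"
      by (simp add: potential_def)
    also have "\<dots> \<le> potential k W"
    proof (cases "W < k")
      case False
      then show ?thesis
        using \<open>\<not> k \<le> W'\<close> potential_ge_threshold[of k W] by simp
    qed (use \<open>W' < W\<close> in \<open>simp add: potential_def\<close>)
    finally show ?thesis .
  qed
qed

lemma weighted_majority_mistakes_le_potential:
  "\<forall>e\<in>set S. valid_example n k e \<Longrightarrow> i < n \<Longrightarrow> inconsistencies i h + expert_errors i S \<le> r \<Longrightarrow>
    real (bandit_mistakes (weighted_majority n k r) h S) \<le> potential k (total_weight n r h)"
proof (induction S arbitrary: h)
  case Nil
  then show ?case by (simp add: potential_nonneg)
next
  case (Cons e S)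
  obtain x y where e: "e = (x, y)" by (cases e)
  have valid: "valid_instance n k x" "1 \<le> k"
    using Cons.prems(1) by (auto simp: e valid_example_iff)
  define p where "p = weighted_majority n k r h x"
  define h' where "h' = h @ [(x, p, p = y)]"
  have "inconsistencies i h' \<le> inconsistencies i h + (if x ! i \<noteq> y then 1 else 0)"
    by (auto simp: h'_def)
  then have "inconsistencies i h' + expert_errors i S \<le> r"
    using Cons.prems(3) by (simp add: e)
  then have IH: "real (bandit_mistakes (weighted_majority n k r) h' S) \<le> potential k (total_weight n r h')"
    using Cons by simp
  have "0 < total_weight n r h"
    using Cons.prems(2,3) by (intro total_weight_pos) auto
  have "potential k (total_weight n r h') + (if p \<noteq> y then 1 else 0) \<le> potential k (total_weight n r h)"
  proof (cases "p = y")
    case True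
    then show ?thesis
      unfolding h'_def by (simp add: potential_mono total_weight_snoc_le)
  next
    case False
    then show ?thesis
      using total_weight_mistake[OF valid, of r h] \<open>0 < total_weight n r h\<close>
      by (simp add: h'_def p_def potential_mistake)
  qed
  moreover have "real (bandit_mistakes (weighted_majority n k r) h (e # S))
      = (if p \<noteq> y then 1 else 0) + real (bandit_mistakes (weighted_majority n k r) h' S)"
    by (simp add: e Let_def flip: p_def h'_def)
  ultimately show ?case
    using IH by linarith
qed

lemma weighted_majority_mistake_bound:
  assumes "1 \<le> k" "k \<le> n" "S \<in> P_seqs n k r"
  shows "real (bandit_mistakes (weighted_majority n k r) [] S) \<le> 3 * real k * (ln (real n / real k) + real r + 1)"
proof -
  obtain i where "i < n" "expert_errors i S \<le> r" "\<forall>e\<in>set S. valid_example n k e"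
    using assms(3) by (auto simp: P_seqs_def)
  then have "real (bandit_mistakes (weighted_majority n k r) [] S) \<le> potential k (total_weight n r [])"
    by (intro weighted_majority_mistakes_le_potential) auto
  also have "total_weight n r [] = n * 2 ^ (r + 1)"
    by (simp add: total_weight_def weight_def)
  also have "k \<le> n * 2 ^ (r + 1)"
    using assms(2) by (metis le_trans mult_le_mono2 mult.right_neutral one_le_power one_le_numeral)
  then have "potential k (n * 2 ^ (r + 1)) = real k + 2 * real k * (ln (real n / real k) + (real r + 1) * ln 2)"
    using assms(1,2) by (simp add: potential_def ln_mult ln_div ln_realpow algebra_simps)
  also have "\<dots> \<le> 3 * real k * (ln (real n / real k) + real r + 1)"
  proof -
    define A where "A = real k * ln (real n / real k)"
    define P where "P = real k * (real r + 1)"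
    have "0 \<le> A"
      using assms(2) ln_ratio_nonneg by (simp add: A_def)
    moreover have "P * ln 2 \<le> P"
      using ln_2_less_1 by (intro mult_left_le) (auto simp: P_def)
    moreover have "real k \<le> P"
      using mult_left_mono[of 1 "real r + 1" "real k"] by (simp add: P_def)
    moreover have "real k + 2 * real k * (ln (real n / real k) + (real r + 1) * ln 2)
        = real k + 2 * A + 2 * (P * ln 2)"
      by (simp add: A_def P_def algebra_simps)
    moreover have "3 * real k * (ln (real n / real k) + real r + 1) = 3 * A + 3 * P"
      by (simp add: A_def P_def algebra_simps)
    ultimately show ?thesis
      by linarith
  qed
  finally show ?thesis .
qed

section \<open>Lower bounds: adversaries that reject every prediction\<close>

fun rejecting_run :: "(history \<Rightarrow> inst) \<Rightarrow> learner \<Rightarrow> history \<Rightarrow> nat \<Rightarrow> history" where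
  "rejecting_run X L h 0 = []"
| "rejecting_run X L h (Suc t) =
     (X h, L h (X h), False) # rejecting_run X L (h @ [(X h, L h (X h), False)]) t"

lemma length_rejecting_run [simp]: "length (rejecting_run X L h t) = t"
  by (induction t arbitrary: h) simp_all

lemma rejecting_run_instance: "(x, p, b) \<in> set (rejecting_run X L h t) \<Longrightarrow> x \<in> range X"
  by (induction t arbitrary: h) auto

definition agreements :: "nat \<Rightarrow> history \<Rightarrow> nat" where
  "agreements i h = length (filter (\<lambda>(x, p, b). x ! i = p) h)"

lemma agreements_Nil [simp]: "agreements i [] = 0"
  by (simp add: agreements_def)

lemma agreements_Cons [simp]:
  "agreements i ((x, p, b) # h) = (if x ! i = p then 1 else 0) + agreements i h"
  by (simp add: agreements_def)

lemma agreements_append [simp]: "agreements i (h @ h') = agreements i h + agreements i h'"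
  by (simp add: agreements_def)

definition adversary_label :: "nat \<Rightarrow> inst \<Rightarrow> nat \<Rightarrow> nat" where
  "adversary_label i x p = (if x ! i \<noteq> p then x ! i else if p = 1 then 2 else 1)"

definition adversary_examples :: "nat \<Rightarrow> history \<Rightarrow> example list" where
  "adversary_examples i ts = map (\<lambda>(x, p, b). (x, adversary_label i x p)) ts"

lemma adversary_label_neq: "adversary_label i x p \<noteq> p"
  by (simp add: adversary_label_def)

lemma bandit_mistakes_adversary_examples:
  "bandit_mistakes L h (adversary_examples i (rejecting_run X L h t)) = t"
  by (induction t arbitrary: h) (simp_all add: adversary_examples_def adversary_label_neq [symmetric])

lemma adversary_label_wrong_iff: "x ! i \<noteq> adversary_label i x p \<longleftrightarrow> x ! i = p"
  by (simp add: adversary_label_def)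

lemma expert_errors_adversary_examples: "expert_errors i (adversary_examples i ts) = agreements i ts"
  by (induction ts) (auto simp: adversary_examples_def adversary_label_wrong_iff)

lemma rejecting_run_forces_mistakes:
  assumes valid: "\<And>h. valid_instance n k (X h)" and "2 \<le> k" "i < n"
    and "agreements i (rejecting_run X L [] T) \<le> r"
  shows "\<exists>S\<in>P_seqs n k r. bandit_mistakes L [] S = T"
proof
  let ?ts = "rejecting_run X L [] T"
  show "bandit_mistakes L [] (adversary_examples i ?ts) = T"
    by (rule bandit_mistakes_adversary_examples)
  have "valid_example n k (x, adversary_label i x p)" if "(x, p, b) \<in> set ?ts" for x p b
  proof -
    have "valid_instance n k x"
      using rejecting_run_instance[OF that] valid by auto
    then show ?thesis
      using valid_instance_nth[of n k x i] \<open>2 \<le> k\<close> \<open>i < n\<close>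
      by (auto simp: valid_example_iff adversary_label_def)
  qed
  then have "\<forall>e\<in>set (adversary_examples i ?ts). valid_example n k e"
    by (auto simp: adversary_examples_def)
  then show "adversary_examples i ?ts \<in> P_seqs n k r"
    using assms(3,4) by (auto simp: P_seqs_def expert_errors_adversary_examples)
qed

lemma sum_agreements_le_length:
  assumes "finite J" and "\<And>x p b. (x, p, b) \<in> set ts \<Longrightarrow> inj_on ((!) x) J"
  shows "(\<Sum>j\<in>J. agreements j ts) \<le> length ts"
  using assms(2)
proof (induction ts)
  case (Cons e ts)
  obtain x p b where e: "e = (x, p, b)"
    by (cases e)
  have "inj_on ((!) x) J"
    using Cons.prems by (auto simp: e)
  then have "card {j\<in>J. x ! j = p} \<le> 1"
    using assms(1) by (auto simp: card_le_Suc0_iff_eq dest: inj_onD)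
  moreover have "(\<Sum>j\<in>J. agreements j (e # ts)) = card {j\<in>J. x ! j = p} + (\<Sum>j\<in>J. agreements j ts)"
    using assms(1) by (simp add: e sum.distrib sum.If_cases Int_def)
  moreover have "(\<Sum>j\<in>J. agreements j ts) \<le> length ts"
    by (rule Cons.IH) (auto intro: Cons.prems)
  ultimately show ?case
    by simp
qed simp

definition staircase :: "nat \<Rightarrow> nat \<Rightarrow> inst" where
  "staircase n k = map (\<lambda>j. min (Suc j) k) [0..<n]"

lemma valid_staircase: "1 \<le> k \<Longrightarrow> valid_instance n k (staircase n k)"
  by (auto simp: valid_instance_def staircase_def)

lemma inj_on_staircase: "k \<le> n \<Longrightarrow> inj_on ((!) (staircase n k)) {..<k}"
  by (auto simp: inj_on_def staircase_def)

lemma lower_bound_by_rounds: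
  assumes "2 \<le> k" "k \<le> n"
  shows "\<exists>S\<in>P_seqs n k r. bandit_mistakes L [] S = k * (r + 1) - 1"
proof -
  let ?T = "k * (r + 1) - 1"
  let ?ts = "rejecting_run (\<lambda>_. staircase n k) L [] ?T"
  have "(\<Sum>j<k. agreements j ?ts) \<le> length ?ts"
    using inj_on_staircase[OF assms(2)]
    by (intro sum_agreements_le_length) (auto dest: rejecting_run_instance)
  then have sum_le: "(\<Sum>j<k. agreements j ?ts) \<le> ?T"
    by simp
  have "\<exists>j<k. agreements j ?ts \<le> r"
  proof (rule ccontr)
    assume "\<not> (\<exists>j<k. agreements j ?ts \<le> r)"
    then have "(\<Sum>j<k. r + 1) \<le> (\<Sum>j<k. agreements j ?ts)"
      by (intro sum_mono) (simp add: not_le Suc_le_eq)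
    with sum_le assms(1) show False
      by simp
  qed
  then obtain j where "j < k" "agreements j ?ts \<le> r"
    by blast
  then show ?thesis
    using assms valid_staircase by (intro rejecting_run_forces_mistakes[of n k]) auto
qed

definition survivors :: "nat \<Rightarrow> history \<Rightarrow> nat set" where
  "survivors n h = {i. i < n \<and> agreements i h = 0}"

definition rank :: "nat set \<Rightarrow> nat \<Rightarrow> nat" where
  "rank A i = card {j\<in>A. j < i}"

text \<open>The survivors are dealt out to the \<open>k\<close> labels in turn, so whatever the learner predicts,
  at most \<open>\<lceil>s/k\<rceil>\<close> of the \<open>s\<close> survivors agree with it.\<close>
definition round_robin :: "nat \<Rightarrow> nat \<Rightarrow> history \<Rightarrow> inst" where
  "round_robin n k h =
     map (\<lambda>i. if i \<in> survivors n h then rank (survivors n h) i mod k + 1 else 1) [0..<n]"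

lemma valid_round_robin: "1 \<le> k \<Longrightarrow> valid_instance n k (round_robin n k h)"
  by (auto simp: valid_instance_def round_robin_def Suc_le_eq)

lemma rank_less_card: "finite A \<Longrightarrow> i \<in> A \<Longrightarrow> rank A i < card A"
  unfolding rank_def by (rule psubset_card_mono) auto

lemma strict_mono_on_rank: "finite A \<Longrightarrow> strict_mono_on A (rank A)"
  unfolding rank_def by (intro strict_mono_onI psubset_card_mono) auto

lemma card_residue_class_le:
  assumes "0 < k"
  shows "k * card {m. m < s \<and> m mod k = c} \<le> s + k - 1"
proof -
  let ?C = "{m. m < s \<and> m mod k = c}"
  have inj: "inj_on (\<lambda>m. m div k) ?C"
    by (rule inj_onI) (metis (mono_tags, lifting) div_mult_mod_eq mem_Collect_eq)
  have image: "(\<lambda>m. m div k) ` ?C \<subseteq> {..<(s + k - 1) div k}"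
  proof clarify
    fix m
    assume "m < s"
    moreover have "m div k * k \<le> m"
      by (rule div_times_less_eq_dividend)
    ultimately have "Suc (m div k) * k \<le> s + k - 1"
      unfolding mult_Suc by linarith
    then show "m div k < (s + k - 1) div k"
      using assms by (simp add: less_eq_div_iff_mult_less_eq flip: Suc_le_eq)
  qed
  have "card ?C \<le> (s + k - 1) div k"
    using card_inj_on_le[OF inj image] by simp
  then show ?thesis
    using times_div_less_eq_dividend[of k "s + k - 1"] by (meson le_trans mult_le_mono2)
qed

lemma card_rank_class_le:
  assumes "finite A" "0 < k"
  shows "k * card {i\<in>A. rank A i mod k = c} \<le> card A + k - 1"
proof -
  have "card {i\<in>A. rank A i mod k = c} = card (rank A ` {i\<in>A. rank A i mod k = c})"
    using strict_mono_on_imp_inj_on[OF strict_mono_on_rank[OF assms(1)]]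
    by (intro card_image[symmetric]) (auto intro: inj_on_subset)
  also have "\<dots> \<le> card {m. m < card A \<and> m mod k = c}"
    using rank_less_card[OF assms(1)] by (intro card_mono) auto
  finally show ?thesis
    using card_residue_class_le[OF assms(2), of "card A" c] by (meson le_trans mult_le_mono2)
qed

text \<open>That is, \<open>s' \<ge> s - \<lceil>s/k\<rceil>\<close> for the numbers \<open>s, s'\<close> of survivors before and after the round,
  in the form \<open>s' + k \<ge> (1 - 1/k) (s + k)\<close>, which iterates.\<close>
lemma survivors_round_robin_step:
  fixes L :: learner and n k :: nat and h :: history
  assumes "1 \<le> k"
  defines "x \<equiv> round_robin n k h"
  shows "(k - 1) * (card (survivors n h) + k) \<le> k * (card (survivors n (h @ [(x, L h x, False)])) + k)"
proof -
  define V where "V = survivors n h"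
  define G where "G = {i\<in>V. x ! i = L h x}"
  have "finite V"
    by (simp add: V_def survivors_def)
  have "survivors n (h @ [(x, L h x, False)]) = V - G"
    by (auto simp: V_def G_def survivors_def)
  moreover have "card V = card (V - G) + card G"
    using \<open>finite V\<close> card_mono[of V G] by (simp add: G_def card_Diff_subset)
  moreover have "k * card G \<le> card V + k - 1"
  proof -
    have "x ! i = rank V i mod k + 1" if "i \<in> V" for i
      using that by (auto simp: x_def V_def round_robin_def survivors_def)
    then have "G \<subseteq> {i\<in>V. rank V i mod k = L h x - 1}"
      by (auto simp: G_def)
    then have "card G \<le> card {i\<in>V. rank V i mod k = L h x - 1}"
      using \<open>finite V\<close> by (intro card_mono) auto
    then have "k * card G \<le> k * card {i\<in>V. rank V i mod k = L h x - 1}"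
      by simp
    also have "\<dots> \<le> card V + k - 1"
      using \<open>finite V\<close> assms by (intro card_rank_class_le) auto
    finally show ?thesis .
  qed
  moreover have "(k - 1) * (card V + k) + (card V + k) = k * (card V + k)"
    using assms by (cases k) auto
  ultimately show ?thesis
    unfolding V_def[symmetric] by (simp add: algebra_simps)
qed

lemma survivors_round_robin_run:
  fixes L :: learner
  assumes "1 \<le> k"
  shows "(k - 1) ^ t * (card (survivors n h) + k)
    \<le> k ^ t * (card (survivors n (h @ rejecting_run (round_robin n k) L h t)) + k)"
proof (induction t arbitrary: h)
  case (Suc t)
  let ?x = "round_robin n k h"
  let ?h = "h @ [(?x, L h ?x, False)]"
  have "(k - 1) ^ Suc t * (card (survivors n h) + k) = (k - 1) ^ t * ((k - 1) * (card (survivors n h) + k))"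
    by simp
  also have "\<dots> \<le> (k - 1) ^ t * (k * (card (survivors n ?h) + k))"
    using survivors_round_robin_step[OF assms] by (intro mult_le_mono2)
  also have "\<dots> = k * ((k - 1) ^ t * (card (survivors n ?h) + k))"
    by simp
  also have "\<dots> \<le> k * (k ^ t * (card (survivors n (?h @ rejecting_run (round_robin n k) L ?h t)) + k))"
    using Suc.IH by (intro mult_le_mono2)
  finally show ?case
    by simp
qed simp

lemma power_mult_le_pred_power_mult:
  fixes a b :: real
  assumes "2 \<le> k" "0 < a" "0 < b" "real T \<le> real k / 2 * ln (b / a)"
  shows "real k ^ T * a \<le> (real k - 1) ^ T * b"
proof -
  have "real k / (real k - 1) = 1 + 1 / (real k - 1)"
    using assms(1) by (simp add: field_simps)
  also have "\<dots> \<le> exp (1 / (real k - 1))"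
    by (rule exp_ge_add_one_self)
  also have "\<dots> \<le> exp (2 / real k)"
    using assms(1) by (simp add: field_simps)
  finally have "(real k / (real k - 1)) ^ T \<le> exp (2 / real k) ^ T"
    using assms(1) by (intro power_mono) auto
  also have "\<dots> = exp (real T * (2 / real k))"
    by (rule exp_of_nat_mult[symmetric])
  also have "\<dots> \<le> exp (ln (b / a))"
    using assms(1,4) by (subst exp_le_cancel_iff) (simp add: field_simps)
  also have "\<dots> = b / a"
    using assms(2,3) by simp
  finally show ?thesis
    using assms by (simp add: field_simps)
qed

lemma round_robin_leaves_survivor:
  fixes L :: learner
  assumes "2 \<le> k" "real T \<le> real k / 2 * ln ((real n + real k) / (real k + 1))"
  shows "\<exists>i<n. agreements i (rejecting_run (round_robin n k) L [] T) = 0"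
proof -
  let ?s = "card (survivors n (rejecting_run (round_robin n k) L [] T))"
  have "real k ^ T * (real k + 1) \<le> (real k - 1) ^ T * (real n + real k)"
    using assms by (intro power_mult_le_pred_power_mult) auto
  also have "\<dots> \<le> real k ^ T * (real ?s + real k)"
  proof -
    have "survivors n [] = {..<n}"
      by (auto simp: survivors_def)
    then have "(k - 1) ^ T * (n + k) \<le> k ^ T * (?s + k)"
      using survivors_round_robin_run[of k T n "[]" L] assms(1) by simp
    then have "real ((k - 1) ^ T * (n + k)) \<le> real (k ^ T * (?s + k))"
      by (rule of_nat_mono)
    then show ?thesis
      using assms(1) by simp
  qed
  finally have "real k + 1 \<le> real ?s + real k"
    using assms(1) by (subst (asm) mult_le_cancel_left_pos) auto
  then have "survivors n (rejecting_run (round_robin n k) L [] T) \<noteq> {}"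
    by auto
  then show ?thesis
    by (auto simp: survivors_def)
qed

lemma lower_bound_by_experts:
  assumes "2 \<le> k" "k \<le> n"
  shows "\<exists>S\<in>P_seqs n k r. real k / 2 * ln (real n / real k) - real k \<le> real (bandit_mistakes L [] S)"
proof -
  define y where "y = real k / 2 * ln ((real n + real k) / (real k + 1))"
  define T where "T = nat \<lfloor>y\<rfloor>"
  have "0 \<le> y"
    using assms by (simp add: y_def)
  then have "real T \<le> y" "y - 1 \<le> real T"
    by (simp_all add: T_def)
  then obtain i where "i < n" "agreements i (rejecting_run (round_robin n k) L [] T) = 0"
    using round_robin_leaves_survivor[OF assms(1)] unfolding y_def by blast
  then obtain S where S: "S \<in> P_seqs n k r" "bandit_mistakes L [] S = T"
    using rejecting_run_forces_mistakes[of n k "round_robin n k" i L T r] valid_round_robin assms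
    by auto
  have "real n / (2 * real k) \<le> (real n + real k) / (real k + 1)"
    using assms by (intro frac_le) auto
  then have "ln (real n / (2 * real k)) \<le> ln ((real n + real k) / (real k + 1))"
    using assms by (intro ln_mono) auto
  moreover have "ln (real n / (2 * real k)) = ln (real n / real k) - ln 2"
    using assms by (simp add: ln_div ln_mult)
  ultimately have "real k / 2 * (ln (real n / real k) - 1) \<le> y"
    unfolding y_def using ln_2_less_1 by (intro mult_left_mono) auto
  then have "real k / 2 * ln (real n / real k) - real k \<le> real T"
    using \<open>y - 1 \<le> real T\<close> assms by (simp add: algebra_simps)
  then show ?thesis
    using S by auto
qed

section \<open>The optimal mistake bound\<close>

lemma opt_bandit_det_le:
  assumes "0 \<le> B" and "\<And>S. S \<in> P_seqs n k r \<Longrightarrow> real (bandit_mistakes L [] S) \<le> B"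
  shows "\<exists>m. opt_bandit_det n k r = enat m \<and> real m \<le> B"
proof -
  have "opt_bandit_det n k r \<le> (SUP S\<in>P_seqs n k r. enat (bandit_mistakes L [] S))"
    unfolding opt_bandit_det_def by (rule INF_lower) simp
  also have "\<dots> \<le> enat (nat \<lfloor>B\<rfloor>)"
    using assms(2) by (intro SUP_least) (simp add: le_nat_floor)
  finally obtain m where "opt_bandit_det n k r = enat m" "m \<le> nat \<lfloor>B\<rfloor>"
    by (cases "opt_bandit_det n k r") auto
  moreover have "real (nat \<lfloor>B\<rfloor>) \<le> B"
    using assms(1) by simp
  ultimately show ?thesis
    using of_nat_mono[of m "nat \<lfloor>B\<rfloor>"] by (intro exI[of _ m]) simp
qed

lemma opt_bandit_det_ge:
  assumes "\<And>L. \<exists>S\<in>P_seqs n k r. B \<le> real (bandit_mistakes L [] S)"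
    and "opt_bandit_det n k r = enat m"
  shows "B \<le> real m"
proof -
  have "enat (nat \<lceil>B\<rceil>) \<le> opt_bandit_det n k r"
    unfolding opt_bandit_det_def
  proof (rule INF_greatest)
    fix L :: learner
    obtain S where "S \<in> P_seqs n k r" "B \<le> real (bandit_mistakes L [] S)"
      using assms(1) by blast
    then show "enat (nat \<lceil>B\<rceil>) \<le> (SUP S\<in>P_seqs n k r. enat (bandit_mistakes L [] S))"
      by (intro SUP_upper2[of S]) auto
  qed
  then have "nat \<lceil>B\<rceil> \<le> m"
    using assms(2) by simp
  then show ?thesis
    by (rule order_trans[OF real_nat_ceiling_ge of_nat_mono])
qed

lemma opt_bandit_det_bounds:
  assumes "2 \<le> k" "k \<le> n"
  shows "\<exists>m. opt_bandit_det n k r = enat m \<and>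
    1 / 8 * real k * (ln (real n / real k) + real r + 1) \<le> real m \<and>
    real m \<le> 3 * real k * (ln (real n / real k) + real r + 1)"
proof -
  define A where "A = real k * ln (real n / real k)"
  define P where "P = real k * (real r + 1)"
  have "0 \<le> A"
    using assms(2) by (simp add: A_def ln_ratio_nonneg)
  have "2 \<le> real k" "real k \<le> P"
    using assms(1) mult_left_mono[of 1 "real r + 1" "real k"] by (simp_all add: P_def)
  have "0 \<le> 3 * real k * (ln (real n / real k) + real r + 1)"
    using assms(2) by (simp add: ln_ratio_nonneg)
  moreover have "1 \<le> k"
    using assms(1) by simp
  ultimately obtain m where m: "opt_bandit_det n k r = enat m"
    and upper: "real m \<le> 3 * real k * (ln (real n / real k) + real r + 1)"
    using opt_bandit_det_le weighted_majority_mistake_bound[OF _ assms(2)] by metis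
  have "real (k * (r + 1) - 1) \<le> real m"
  proof (rule opt_bandit_det_ge[OF _ m])
    fix L :: learner
    show "\<exists>S\<in>P_seqs n k r. real (k * (r + 1) - 1) \<le> real (bandit_mistakes L [] S)"
      using lower_bound_by_rounds[OF assms, of r L] by (metis order_refl)
  qed
  then have rounds: "P - 1 \<le> real m"
    using assms(1) by (simp add: P_def distrib_left)
  have experts: "A / 2 - real k \<le> real m"
    using lower_bound_by_experts[OF assms] unfolding A_def by (intro opt_bandit_det_ge[OF _ m]) simp
  have "1 / 8 * real k * (ln (real n / real k) + real r + 1) = (A + P) / 8"
    by (simp add: A_def P_def algebra_simps)
  also have "\<dots> \<le> real m"
    using rounds experts \<open>0 \<le> A\<close> \<open>2 \<le> real k\<close> \<open>real k \<le> P\<close> by simp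
  finally show ?thesis
    using m upper by blast
qed

theorem theorem4p1:
  "\<exists>c C :: real. 0 < c \<and> c \<le> C \<and>
     (\<forall>n k r :: nat. 2 \<le> k \<and> k \<le> n \<longrightarrow>
        (\<exists>m :: nat. opt_bandit_det n k r = enat m \<and>
           c * real k * (ln (real n / real k) + real r + 1) \<le> real m \<and>
           real m \<le> C * real k * (ln (real n / real k) + real r + 1)))"
  using opt_bandit_det_bounds by (intro exI[of _ "1 / 8"] exI[of _ 3]) auto

end
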